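(* For every $n\in\mathbb{N}$ there exists a constant $N\in\mathbb{N}$ such that the Torrent algorithm, run on any input $X\in\mathbb{R}^{n\times d}$, $Y\in\mathbb{R}^n$, $a\in\{1,\dots,n\}$, terminates (its while-loop stops) after fewer than $N$ iterations.
   Context: For $S\subseteq\{1,\dots,n\}$, $X_S$ and $Y_S$ denote the rows/entries with indices in $S$, and $\hat\beta^S_{\mathrm{OLS}}(X,Y):=(X_S^\top X_S)^{+}X_S^\top Y_S$ ($^{+}$: Moore–Penrose inverse). For $v\in\mathbb{R}^n$ and $a\in\{1,\dots,n\}$, $\mathrm{HT}(v,a)$ is the set of indices of the $a$ smallest entries of $v$, ties broken by a fixed deterministic rule. Torrent: set $S_0=\{1,\dots,n\}$, $e=Y$, $\mathrm{err}=\infty$, $t=0$. While $\|e\|_2<\mathrm{err}$ (here $e$ is the residual vector indexed by the current set $S_t$): set $t\gets t+1$, $\mathrm{err}\gets\|e\|_2$, $\hat\beta^t\gets\hat\beta^{S_{t-1}}_{\mathrm{OLS}}(X,Y)$, $v\gets|Y-X\hat\beta^t|$ (entrywise absolute value), $S_t\gets\mathrm{HT}(v,a)$, $e\gets|Y_{S_t}-X_{S_t}\hat\beta^t|$. Return $\hat\beta^t$. *)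

theory Defs
  imports Jordan_Normal_Form.Matrix "HOL-Library.Extended_Real"
begin

text \<open>Indices are 0-based: {0,...,n-1} plays the role of {1,...,n}.\<close>

text \<open>Moore-Penrose inverse (real matrices, so conjugate transpose = transpose),
  defined by the four Penrose conditions.\<close>
definition mp_inverse :: "real mat \<Rightarrow> real mat" where
  "mp_inverse A = (THE B. B \<in> carrier_mat (dim_col A) (dim_row A) \<and>
      A * B * A = A \<and> B * A * B = B \<and>
      transpose_mat (A * B) = A * B \<and> transpose_mat (B * A) = B * A)"

definition rows_sub :: "real mat \<Rightarrow> nat set \<Rightarrow> real mat" where
  "rows_sub X S = mat (card S) (dim_col X) (\<lambda>(i, j). X $$ (sorted_list_of_set S ! i, j))"

definition vec_sub :: "real vec \<Rightarrow> nat set \<Rightarrow> real vec" where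
  "vec_sub Y S = vec (card S) (\<lambda>i. Y $ (sorted_list_of_set S ! i))"

definition ols :: "real mat \<Rightarrow> real vec \<Rightarrow> nat set \<Rightarrow> real vec" where
  "ols X Y S = mp_inverse (transpose_mat (rows_sub X S) * rows_sub X S)
                *\<^sub>v (transpose_mat (rows_sub X S) *\<^sub>v vec_sub Y S)"

text \<open>A hard-thresholding rule: HT(v,a) returns a set of a indices of smallest entries of v
  (any deterministic tie-breaking, i.e. any function with this property).\<close>
definition is_HT :: "(real vec \<Rightarrow> nat \<Rightarrow> nat set) \<Rightarrow> bool" where
  "is_HT ht \<longleftrightarrow> (\<forall>v a. 1 \<le> a \<and> a \<le> dim_vec v \<longrightarrow>
      ht v a \<subseteq> {..<dim_vec v} \<and> card (ht v a) = a \<and>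
      (\<forall>i\<in>ht v a. \<forall>j\<in>{..<dim_vec v} - ht v a. v $ i \<le> v $ j))"

text \<open>Torrent state: (err, S, e, beta), where the residual vector e is indexed by S
  (stored as a function on indices); its 2-norm is sqrt (sum over S of e_i^2).\<close>
type_synonym torrent_state = "ereal \<times> nat set \<times> (nat \<Rightarrow> real) \<times> real vec"

definition norm_on :: "nat set \<Rightarrow> (nat \<Rightarrow> real) \<Rightarrow> real" where
  "norm_on S e = sqrt (\<Sum>i\<in>S. (e i)\<^sup>2)"

definition torrent_init :: "real mat \<Rightarrow> real vec \<Rightarrow> torrent_state" where
  "torrent_init X Y = (\<infinity>, {..<dim_vec Y}, (\<lambda>i. Y $ i), 0\<^sub>v (dim_col X))"

definition torrent_cond :: "torrent_state \<Rightarrow> bool" where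
  "torrent_cond st = (case st of (err, S, e, \<beta>) \<Rightarrow> ereal (norm_on S e) < err)"

definition torrent_step :: "(real vec \<Rightarrow> nat \<Rightarrow> nat set) \<Rightarrow> real mat \<Rightarrow> real vec \<Rightarrow> nat
    \<Rightarrow> torrent_state \<Rightarrow> torrent_state" where
  "torrent_step ht X Y a st = (case st of (err, S, e, \<beta>) \<Rightarrow>
     (let err' = ereal (norm_on S e);
          \<beta>' = ols X Y S;
          v = map_vec abs (Y - X *\<^sub>v \<beta>');
          S' = ht v a;
          e' = (\<lambda>i. \<bar>Y $ i - (X *\<^sub>v \<beta>') $ i\<bar>)
      in (err', S', e', \<beta>')))"

text \<open>After t loop iterations the state is (torrent_step ...)^^t applied to the initial state;
  the loop stops at the first t with the guard false.\<close>

end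

theory Submission
  imports Defs
begin

text \<open>The residual errors of Torrent depend only on the active set: from the second iteration
  on, the loop guard compares the error reached from the active set \<open>S\<^sub>k\<^sub>+\<^sub>1\<close> with the one
  reached from \<open>S\<^sub>k\<close>. While the loop runs, this error strictly decreases along the active
  sets, so they are pairwise distinct subsets of the \<open>n\<close> indices. Hence the loop stops after
  at most \<open>2\<^sup>n + 1\<close> iterations, a bound independent of \<open>X\<close>, \<open>Y\<close> and \<open>a\<close>.\<close>

lemma descent_in_finite_set_bounded:
  fixes \<phi> :: "'a \<Rightarrow> 'b::order"
  assumes "finite A"
    and in_A: "\<And>k. k \<le> m \<Longrightarrow> x k \<in> A"
    and descent: "\<And>k. k < m \<Longrightarrow> \<phi> (x (Suc k)) < \<phi> (x k)"
  shows "m < card A"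
proof -
  have decreasing: "\<phi> (x j) < \<phi> (x i)" if "i < j" "j \<le> m" for i j
  proof -
    have "j \<le> m \<longrightarrow> \<phi> (x j) < \<phi> (x i)"
      using \<open>i < j\<close>
    proof (induction rule: less_Suc_induct)
      case (1 i)
      then show ?case using descent by simp
    next
      case (2 i j k)
      then show ?case by (meson less_imp_le order.strict_trans order_trans)
    qed
    then show ?thesis using \<open>j \<le> m\<close> by blast
  qed
  have "inj_on x {..m}"
    by (rule inj_onI) (metis atMost_iff decreasing less_irrefl nat_neq_iff)
  moreover have "x ` {..m} \<subseteq> A"
    using in_A by blast
  ultimately have "card {..m} \<le> card A"
    using card_inj_on_le \<open>finite A\<close> by blast
  then show ?thesis by simp
qed

definition torrent_next_set ::
    "(real vec \<Rightarrow> nat \<Rightarrow> nat set) \<Rightarrow> real mat \<Rightarrow> real vec \<Rightarrow> nat \<Rightarrow> nat set \<Rightarrow> nat set" where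
  "torrent_next_set ht X Y a S = ht (map_vec abs (Y - X *\<^sub>v ols X Y S)) a"

definition torrent_residual :: "real mat \<Rightarrow> real vec \<Rightarrow> nat set \<Rightarrow> nat \<Rightarrow> real" where
  "torrent_residual X Y S = (\<lambda>i. \<bar>Y $ i - (X *\<^sub>v ols X Y S) $ i\<bar>)"

definition torrent_active ::
    "(real vec \<Rightarrow> nat \<Rightarrow> nat set) \<Rightarrow> real mat \<Rightarrow> real vec \<Rightarrow> nat \<Rightarrow> nat \<Rightarrow> nat set" where
  "torrent_active ht X Y a k = (torrent_next_set ht X Y a ^^ k) {..<dim_vec Y}"

definition torrent_error ::
    "(real vec \<Rightarrow> nat \<Rightarrow> nat set) \<Rightarrow> real mat \<Rightarrow> real vec \<Rightarrow> nat \<Rightarrow> nat set \<Rightarrow> real" where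
  "torrent_error ht X Y a S = norm_on (torrent_next_set ht X Y a S) (torrent_residual X Y S)"

lemma torrent_step_eq:
  "torrent_step ht X Y a (err, S, e, \<beta>) =
     (ereal (norm_on S e), torrent_next_set ht X Y a S, torrent_residual X Y S, ols X Y S)"
  by (simp add: torrent_step_def torrent_next_set_def torrent_residual_def Let_def)

lemma torrent_iterate_Suc:
  "snd ((torrent_step ht X Y a ^^ Suc k) (torrent_init X Y)) =
     (torrent_active ht X Y a (Suc k), torrent_residual X Y (torrent_active ht X Y a k),
      ols X Y (torrent_active ht X Y a k))"
proof (induction k)
  case 0
  show ?case by (simp add: torrent_init_def torrent_step_eq torrent_active_def)
next
  case (Suc k)
  obtain err st where "(torrent_step ht X Y a ^^ Suc k) (torrent_init X Y) = (err, st)"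
    by (metis prod.exhaust)
  with Suc show ?case by (simp add: torrent_step_eq torrent_active_def)
qed

lemma torrent_cond_iterate_Suc_Suc:
  "torrent_cond ((torrent_step ht X Y a ^^ Suc (Suc k)) (torrent_init X Y)) \<longleftrightarrow>
     torrent_error ht X Y a (torrent_active ht X Y a (Suc k))
       < torrent_error ht X Y a (torrent_active ht X Y a k)"
proof -
  obtain err where "(torrent_step ht X Y a ^^ Suc k) (torrent_init X Y) =
      (err, torrent_active ht X Y a (Suc k), torrent_residual X Y (torrent_active ht X Y a k),
       ols X Y (torrent_active ht X Y a k))"
    using torrent_iterate_Suc by (metis prod.collapse)
  then show ?thesis
    by (simp add: torrent_step_eq torrent_cond_def torrent_error_def torrent_active_def)
qed

lemma torrent_next_set_subset:
  assumes "is_HT ht" "X \<in> carrier_mat n d" "Y \<in> carrier_vec n" "1 \<le> a" "a \<le> n"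
  shows "torrent_next_set ht X Y a S \<subseteq> {..<n}"
proof -
  let ?v = "map_vec abs (Y - X *\<^sub>v ols X Y S)"
  have "dim_vec ?v = n" using assms(2,3) by simp
  then show ?thesis
    using assms(1,4,5) unfolding is_HT_def torrent_next_set_def by metis
qed

lemma torrent_active_subset:
  assumes "is_HT ht" "X \<in> carrier_mat n d" "Y \<in> carrier_vec n" "1 \<le> a" "a \<le> n"
  shows "torrent_active ht X Y a k \<subseteq> {..<n}"
proof (cases k)
  case 0
  then show ?thesis using assms(3) by (simp add: torrent_active_def)
next
  case (Suc j)
  then show ?thesis
    using torrent_next_set_subset[OF assms] by (simp add: torrent_active_def)
qed

theorem lemma3p2:
  fixes ht :: "real vec \<Rightarrow> nat \<Rightarrow> nat set"
  assumes "is_HT ht"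
  shows "\<forall>n::nat. \<exists>N::nat. \<forall>d::nat. \<forall>X Y (a::nat).
           X \<in> carrier_mat n d \<longrightarrow> Y \<in> carrier_vec n \<longrightarrow> 1 \<le> a \<longrightarrow> a \<le> n \<longrightarrow>
           (\<exists>t<N. \<not> torrent_cond ((torrent_step ht X Y a ^^ t) (torrent_init X Y)))"
proof (intro allI)
  fix n :: nat
  have "\<exists>t < 2 ^ n + 2. \<not> torrent_cond ((torrent_step ht X Y a ^^ t) (torrent_init X Y))"
    if dims: "X \<in> carrier_mat n d" "Y \<in> carrier_vec n" "1 \<le> a" "a \<le> n" for d a X Y
  proof (rule ccontr)
    assume "\<not> ?thesis"
    then have "torrent_error ht X Y a (torrent_active ht X Y a (Suc k))
                 < torrent_error ht X Y a (torrent_active ht X Y a k)" if "k < 2 ^ n" for k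
      using that torrent_cond_iterate_Suc_Suc by (metis add_less_cancel_right add_2_eq_Suc')
    then have "2 ^ n < card (Pow {..<n})"
      using descent_in_finite_set_bounded[of "Pow {..<n}" "2 ^ n" "torrent_active ht X Y a"]
        torrent_active_subset[OF assms dims] by blast
    then show False by (simp add: card_Pow)
  qed
  then show "\<exists>N. \<forall>d X Y a. X \<in> carrier_mat n d \<longrightarrow> Y \<in> carrier_vec n \<longrightarrow> 1 \<le> a \<longrightarrow> a \<le> n \<longrightarrow>
      (\<exists>t<N. \<not> torrent_cond ((torrent_step ht X Y a ^^ t) (torrent_init X Y)))"
    by blast
qed

end
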